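(* Let $1<q_1<q_2<\infty$. Then there exists a $2\pi$-periodic $\log$-H\"older continuous function $p:[0,2\pi]\to[q_1,q_2]$ (so $q_1\le p(\theta)\le q_2$ for all $\theta$) such that $H^{p(\cdot)}(\mathbb{D})\neq H^q(\mathbb{D})$ for every $q$ with $q_1\le q\le q_2$.
   Context: $\mathbb{D}$ is the open unit disk and $\mathbb{T}$ the unit circle. $p$ is $\log$-H\"older continuous if there is $C_{\log}>0$ with $|p(x)-p(y)|\le C_{\log}/\log(1/|x-y|)$ for all $x,y\in[0,2\pi]$. $L^{p(\cdot)}(\mathbb{T})$ is the space of measurable $f:\mathbb{T}\to\mathbb{C}$ with $\int_0^{2\pi}|f(e^{i\theta})|^{p(\theta)}\,d\theta<\infty$, with Luxemburg norm $\|f\|_{L^{p(\cdot)}(\mathbb{T})}=\inf\{\lambda>0:\int_0^{2\pi}|f(e^{i\theta})/\lambda|^{p(\theta)}d\theta\le1\}$. $H^{p(\cdot)}(\mathbb{D})$ is the space of analytic $f:\mathbb{D}\to\mathbb{C}$ with $\sup_{0\le r<1}\|f_r\|_{L^{p(\cdot)}(\mathbb{T})}<\infty$, where $f_r(\zeta)=f(r\zeta)$; $H^q(\mathbb{D})$ is the classical Hardy space (constant exponent $q$). *)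

theory Defs
  imports "HOL-Complex_Analysis.Complex_Analysis"
begin

text \<open>log-Hoelder continuity on [0,2pi]. The condition is only meaningful when
  0 < |x-y| < 1 (where log(1/|x-y|) > 0).\<close>
definition log_holder :: "(real \<Rightarrow> real) \<Rightarrow> bool" where
  "log_holder p \<longleftrightarrow> (\<exists>C>0. \<forall>x\<in>{0..2*pi}. \<forall>y\<in>{0..2*pi}.
      0 < \<bar>x - y\<bar> \<and> \<bar>x - y\<bar> < 1 \<longrightarrow> \<bar>p x - p y\<bar> \<le> C / ln (1 / \<bar>x - y\<bar>))"

definition var_modular :: "(real \<Rightarrow> real) \<Rightarrow> (complex \<Rightarrow> complex) \<Rightarrow> ennreal" where
  "var_modular p g = (\<integral>\<^sup>+ \<theta>. ennreal (norm (g (cis \<theta>)) powr p \<theta>) * indicator {0..2*pi} \<theta> \<partial>lborel)"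

text \<open>Luxemburg norm of L^{p(.)}(T) (value \<infinity> if no admissible lambda).\<close>
definition lux_norm :: "(real \<Rightarrow> real) \<Rightarrow> (complex \<Rightarrow> complex) \<Rightarrow> ereal" where
  "lux_norm p g = (INF t \<in> {t::real. t > 0 \<and> var_modular p (\<lambda>z. g z / complex_of_real t) \<le> 1}. ereal t)"

definition hardy_var :: "(real \<Rightarrow> real) \<Rightarrow> (complex \<Rightarrow> complex) set" where
  "hardy_var p = {f. f holomorphic_on ball 0 1 \<and>
      (SUP r \<in> {0..<1::real}. lux_norm p (\<lambda>\<zeta>. f (complex_of_real r * \<zeta>))) < \<infinity>}"

definition hardy :: "real \<Rightarrow> (complex \<Rightarrow> complex) set" where
  "hardy q = {f. f holomorphic_on ball 0 1 \<and>
      (SUP r \<in> {0..<1::real}. \<integral>\<^sup>+ \<theta>. ennreal (norm (f (complex_of_real r * cis \<theta>)) powr q)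
           * indicator {0..2*pi} \<theta> \<partial>lborel) < (\<infinity>::ennreal)}"

end

theory Submission
  imports Defs
begin

text \<open>
  Take p = q2 near theta = 0 and p = q1 where cos theta <= 0; p is Lipschitz, hence log-Hoelder.
  On the circle of radius r, |1 - r e^(it)| lies between a multiple of |t| and (1 - r) + |t|.
  Hence |(1 - z)^(-a)|^s is dominated, uniformly in r, by an integrable multiple of |t|^(-a s)
  when a s < 1, while for a s = 1 its circle integrals grow like log (1 / (1 - r)).
  As the exponent is bounded, membership in H^p(.) amounts to boundedness of the modulars
  int |f(r e^(i theta))|^p(theta) d theta. So (1 - z)^(-1/q2), singular where p = q2, lies in
  H^q for q < q2 but not in H^p(.), and (1 + z)^(-1/q2), singular where p = q1 < q2, lies in
  H^p(.) but not in H^q2.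
\<close>

section \<open>Estimates for 1 - r e^(it)\<close>

lemma sin_ge_third:
  fixes y :: real assumes "0 \<le> y" "y \<le> 2" shows "y / 3 \<le> sin y"
proof -
  have "\<bar>sin y - (\<Sum>m<3. sin_coeff m * y ^ m)\<bar> \<le> inverse (fact 3) * \<bar>y\<bar> ^ 3"
    by (rule Maclaurin_sin_bound)
  moreover have "(\<Sum>m<3. sin_coeff m * y ^ m) = y"
    by (simp add: sin_coeff_def eval_nat_numeral)
  moreover have "inverse (fact 3) * \<bar>y\<bar> ^ 3 = y ^ 3 / 6"
    using assms by (simp add: fact_numeral inverse_eq_divide)
  moreover have "y ^ 3 \<le> 4 * y"
    using assms mult_mono[of y 2 y 2] mult_right_mono[of "y * y" 4 y] by (simp add: power3_eq_cube)
  ultimately show ?thesis by linarith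
qed

lemma abs_sin_half_ge:
  fixes x :: real assumes "\<bar>x\<bar> \<le> pi" shows "\<bar>x\<bar> / 6 \<le> \<bar>sin (x / 2)\<bar>"
proof -
  have "\<bar>x\<bar> / 2 / 3 \<le> sin (\<bar>x\<bar> / 2)"
    using assms pi_less_4 by (intro sin_ge_third) auto
  moreover have "\<bar>sin (x / 2)\<bar> = sin (\<bar>x\<bar> / 2)"
    using assms sin_ge_zero[of "x / 2"] sin_ge_zero[of "- x / 2"]
    by (cases "0 \<le> x") (auto simp: abs_of_nonneg abs_of_nonpos)
  ultimately show ?thesis by simp
qed

lemma norm_one_minus_rcis_sq:
  "cmod (1 - complex_of_real r * cis t) ^ 2 = 1 - 2 * r * cos t + r ^ 2"
proof -
  have "cmod (1 - complex_of_real r * cis t) ^ 2 = (1 - r * cos t) ^ 2 + (r * sin t) ^ 2"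
    by (simp add: cmod_power2)
  also have "\<dots> = 1 - 2 * r * cos t + r ^ 2 * (sin t ^ 2 + cos t ^ 2)"
    by algebra
  also have "\<dots> = 1 - 2 * r * cos t + r ^ 2"
    by simp
  finally show ?thesis .
qed

lemma abs_sin_half_le_norm_one_minus_rcis:
  assumes "0 \<le> r" "r \<le> 1"
  shows "\<bar>sin (t / 2)\<bar> \<le> cmod (1 - complex_of_real r * cis t)"
proof (rule power2_le_imp_le)
  have sin_half: "\<bar>sin (t / 2)\<bar> ^ 2 = (1 - cos t) / 2"
    using cos_double_sin[of "t / 2"] by simp
  have "0 \<le> 1 + cos t" "0 \<le> 1 - cos t"
    using cos_ge_minus_one[of t] cos_le_one[of t] by linarith+
  then have "0 \<le> (1 + cos t) / 2 * (1 - r) ^ 2 + (1 - cos t) / 2 * (r ^ 2 + 2 * r)"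
    using assms by (intro add_nonneg_nonneg mult_nonneg_nonneg) auto
  also have "\<dots> = 1 - 2 * r * cos t + r ^ 2 - (1 - cos t) / 2"
    by (simp add: power2_eq_square field_simps)
  finally show "\<bar>sin (t / 2)\<bar> ^ 2 \<le> cmod (1 - complex_of_real r * cis t) ^ 2"
    unfolding sin_half norm_one_minus_rcis_sq by linarith
qed simp

lemma one_le_norm_one_minus_rcis:
  assumes "0 \<le> r" "cos t \<le> 0"
  shows "1 \<le> cmod (1 - complex_of_real r * cis t)"
proof (rule power2_le_imp_le)
  have "2 * r * cos t \<le> 0"
    using assms by (simp add: mult_nonneg_nonpos)
  then show "1 ^ 2 \<le> cmod (1 - complex_of_real r * cis t) ^ 2"
    unfolding norm_one_minus_rcis_sq power_one using zero_le_power2[of r] by linarith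
qed simp

lemma norm_one_minus_rcis_le:
  assumes "0 \<le> r" "r \<le> 1"
  shows "cmod (1 - complex_of_real r * cis t) \<le> (1 - r) + \<bar>t\<bar>"
proof -
  have "cmod (1 - cis t) ^ 2 = (2 * sin (t / 2)) ^ 2"
    using norm_one_minus_rcis_sq[of 1 t] cos_double_sin[of "t / 2"] by (simp add: power_mult_distrib)
  also have "\<dots> \<le> \<bar>t\<bar> ^ 2"
    using abs_sin_x_le_abs_x[of "t / 2"] by (subst abs_le_square_iff[symmetric]) simp
  finally have "cmod (1 - cis t) \<le> \<bar>t\<bar>"
    by (rule power2_le_imp_le) simp
  have "1 - complex_of_real r * cis t = (1 - cis t) + complex_of_real (1 - r) * cis t"
    by (simp add: algebra_simps)
  then have "cmod (1 - complex_of_real r * cis t) \<le> cmod (1 - cis t) + cmod (complex_of_real (1 - r) * cis t)"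
    by (metis norm_triangle_ineq)
  also have "cmod (complex_of_real (1 - r) * cis t) = 1 - r"
    using assms by (simp add: norm_mult del: of_real_diff)
  finally show ?thesis using \<open>cmod (1 - cis t) \<le> \<bar>t\<bar>\<close> by linarith
qed

lemma norm_one_minus_rcis_pos:
  assumes "\<bar>r\<bar> < 1" shows "0 < cmod (1 - complex_of_real r * cis t)"
proof -
  have "cmod (complex_of_real r * cis t) < 1"
    using assms by (simp add: norm_mult)
  then show ?thesis by auto
qed

text \<open>The three terms are the copies of the singularity t = 0 in the periods meeting [-2pi, 2pi].\<close>
lemma norm_one_minus_rcis_powr_le:
  assumes "0 \<le> r" "r \<le> 1" "0 \<le> s" "\<bar>x\<bar> \<le> 2 * pi" "x \<notin> {0, 2 * pi, - 2 * pi}"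
  shows "cmod (1 - complex_of_real r * cis x) powr (- s)
    \<le> 6 powr s * (\<bar>x\<bar> powr (- s) + \<bar>x - 2 * pi\<bar> powr (- s) + \<bar>x + 2 * pi\<bar> powr (- s))"
proof -
  obtain y where y: "cis y = cis x" "\<bar>y\<bar> \<le> pi" "y \<noteq> 0"
    and y_le: "\<bar>y\<bar> powr (- s) \<le> \<bar>x\<bar> powr (- s) + \<bar>x - 2 * pi\<bar> powr (- s) + \<bar>x + 2 * pi\<bar> powr (- s)"
  proof (cases "\<bar>x\<bar> \<le> pi")
    case True
    then show ?thesis using assms by (intro that[of x]) auto
  next
    case False
    show ?thesis
    proof (cases "0 < x")
      case True
      have "cis (x - 2 * pi) = cis x" by (simp add: cis.ctr complex_eq_iff sin_diff cos_diff)
      then show ?thesis using False True assms by (intro that[of "x - 2 * pi"]) auto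
    next
      case False
      have "cis (x + 2 * pi) = cis x" by (simp add: cis.ctr complex_eq_iff sin_add cos_add)
      then show ?thesis using \<open>\<not> \<bar>x\<bar> \<le> pi\<close> False assms by (intro that[of "x + 2 * pi"]) auto
    qed
  qed
  have "\<bar>y\<bar> / 6 \<le> cmod (1 - complex_of_real r * cis x)"
    using order_trans[OF abs_sin_half_ge[OF y(2)] abs_sin_half_le_norm_one_minus_rcis[OF assms(1,2)]] y(1)
    by simp
  then have "cmod (1 - complex_of_real r * cis x) powr (- s) \<le> (\<bar>y\<bar> / 6) powr (- s)"
    using y(3) assms(3) by (intro powr_mono2') auto
  also have "\<dots> = 6 powr s * \<bar>y\<bar> powr (- s)"
    by (simp add: powr_divide powr_minus_divide)
  also have "\<dots> \<le> 6 powr s * (\<bar>x\<bar> powr (- s) + \<bar>x - 2 * pi\<bar> powr (- s) + \<bar>x + 2 * pi\<bar> powr (- s))"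
    using y_le by (intro mult_left_mono) auto
  finally show ?thesis .
qed

lemma powr_neg_le_one_plus:
  fixes d e s :: real
  assumes "0 < d" "0 \<le> e" "e \<le> s"
  shows "d powr (- e) \<le> 1 + d powr (- s)"
proof (cases "1 \<le> d")
  case True
  then have "d powr (- e) \<le> 1" using assms by (simp add: ge_one_powr_ge_zero powr_minus_divide)
  then show ?thesis using powr_ge_zero[of d "- s"] by linarith
next
  case False
  then have "d powr (- e) \<le> d powr (- s)" using assms by (intro powr_mono') auto
  then show ?thesis by simp
qed

lemma integrable_abs_diff_powr:
  fixes s c a b :: real assumes "s < 1"
  shows "(\<lambda>x. \<bar>x - c\<bar> powr (- s)) integrable_on {a..b}"
proof -
  define R where "R = \<bar>a - c\<bar> + \<bar>b - c\<bar>"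
  have right: "(\<lambda>x. \<bar>x - c'\<bar> powr (- s)) integrable_on {c'..c' + R}" for c'
  proof -
    have "((\<lambda>x. x powr (- s)) has_integral (R powr (1 - s) / (1 - s))) (cbox 0 R)"
      using has_integral_powr_from_0[of "- s" R] assms by (simp add: R_def)
    from has_integral_affinity'[OF this, of 1 "- c'"]
    have "(\<lambda>x. (x - c') powr (- s)) integrable_on {c'..c' + R}"
      by (auto simp: algebra_simps)
    then show ?thesis by (rule integrable_eq) auto
  qed
  have "(\<lambda>x. \<bar>- x - c\<bar> powr (- s)) integrable_on {- c..- c + R}"
    using right[of "- c"] by (rule integrable_eq) (simp add: abs_minus_commute add.commute)
  then have "(\<lambda>x. (\<lambda>y. \<bar>y - c\<bar> powr (- s)) (- x)) integrable_on {- c..- (c - R)}"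
    by simp
  then have left: "(\<lambda>x. \<bar>x - c\<bar> powr (- s)) integrable_on {c - R..c}"
    by (rule Henstock_Kurzweil_Integration.integrable_reflect_real[THEN iffD1])
  have "(\<lambda>x. \<bar>x - c\<bar> powr (- s)) integrable_on {c - R..c + R}"
    using Henstock_Kurzweil_Integration.integrable_combine[OF _ _ left right[of c]]
    by (simp add: R_def)
  then show ?thesis
    by (rule integrable_on_subinterval) (auto simp: R_def)
qed

lemma has_integral_inverse_shift:
  fixes \<epsilon> b c :: real assumes "0 < \<epsilon>" "0 \<le> b"
  shows "((\<lambda>\<theta>. 1 / (\<epsilon> + (\<theta> - c))) has_integral ln ((\<epsilon> + b) / \<epsilon>)) {c..c + b}"
proof -
  have "((\<lambda>\<theta>. 1 / (\<epsilon> + (\<theta> - c))) has_integral ln (\<epsilon> + ((c + b) - c)) - ln (\<epsilon> + (c - c))) {c..c + b}"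
  proof (rule fundamental_theorem_of_calculus)
    fix x assume "x \<in> {c..c + b}"
    then have "0 < \<epsilon> + (x - c)" using assms by auto
    then show "((\<lambda>\<theta>. ln (\<epsilon> + (\<theta> - c))) has_vector_derivative 1 / (\<epsilon> + (x - c))) (at x within {c..c + b})"
      by (auto intro!: derivative_eq_intros simp: has_real_derivative_iff_has_vector_derivative[symmetric])
  qed (use assms in simp)
  then show ?thesis using assms by (simp add: ln_div)
qed

section \<open>Modulars and the Luxemburg norm\<close>

lemma hardy_eq_var_modular:
  "hardy q = {f. f holomorphic_on ball 0 1 \<and>
     (SUP r\<in>{0..<1}. var_modular (\<lambda>_. q) (\<lambda>\<zeta>. f (complex_of_real r * \<zeta>))) < \<infinity>}"
  unfolding hardy_def var_modular_def by simp

lemma var_modular_le_has_integral: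
  assumes "(B has_integral I) {0..2*pi}" "\<forall>\<theta>\<in>{0..2*pi}. 0 \<le> B \<theta>"
    and "AE \<theta> in lborel. \<theta> \<in> {0..2*pi} \<longrightarrow> norm (g (cis \<theta>)) powr p \<theta> \<le> B \<theta>"
  shows "var_modular p g \<le> ennreal I"
proof -
  have "var_modular p g \<le> (\<integral>\<^sup>+ \<theta>. ennreal (B \<theta>) * indicator {0..2*pi} \<theta> \<partial>lborel)"
    unfolding var_modular_def using assms(3)
    by (intro nn_integral_mono_AE) (auto elim!: eventually_mono simp: ennreal_leI indicator_def)
  also have "\<dots> = ennreal I"
    using assms(1,2) by (intro nn_integral_has_integral_lebesgue') auto
  finally show ?thesis .
qed

lemma var_modular_divide_le:
  fixes t :: real
  assumes "p \<in> borel_measurable lborel" "(\<lambda>\<theta>. g (cis \<theta>)) \<in> borel_measurable lborel"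
    and "\<forall>\<theta>\<in>{0..2*pi}. 1 \<le> p \<theta>" "1 \<le> t"
  shows "ennreal t * var_modular p (\<lambda>z. g z / complex_of_real t) \<le> var_modular p g"
proof -
  have pointwise: "t * norm (g (cis \<theta>) / complex_of_real t) powr p \<theta> \<le> norm (g (cis \<theta>)) powr p \<theta>"
    if "\<theta> \<in> {0..2*pi}" for \<theta>
  proof -
    have "t powr 1 \<le> t powr p \<theta>"
      using assms(3,4) that by (intro powr_mono) auto
    then have "t * norm (g (cis \<theta>)) powr p \<theta> \<le> t powr p \<theta> * norm (g (cis \<theta>)) powr p \<theta>"
      using assms(4) by (intro mult_right_mono) auto
    then have "t * (norm (g (cis \<theta>)) powr p \<theta> / t powr p \<theta>) \<le> norm (g (cis \<theta>)) powr p \<theta>"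
      using assms(4) by (simp add: field_simps)
    then show ?thesis
      using assms(4) by (simp add: norm_divide powr_divide)
  qed
  have "ennreal t * var_modular p (\<lambda>z. g z / complex_of_real t)
      = (\<integral>\<^sup>+ \<theta>. ennreal (t * norm (g (cis \<theta>) / complex_of_real t) powr p \<theta>) * indicator {0..2*pi} \<theta> \<partial>lborel)"
    unfolding var_modular_def using assms(1,2,4)
    by (subst nn_integral_cmult[symmetric]) (auto simp: ennreal_mult mult.assoc)
  also have "\<dots> \<le> var_modular p g"
    unfolding var_modular_def using pointwise
    by (intro nn_integral_mono) (auto simp: ennreal_leI indicator_def)
  finally show ?thesis .
qed

lemma var_modular_le_mult_divide:
  fixes t T P :: real
  assumes "p \<in> borel_measurable lborel" "(\<lambda>\<theta>. g (cis \<theta>)) \<in> borel_measurable lborel"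
    and "\<forall>\<theta>\<in>{0..2*pi}. 0 \<le> p \<theta> \<and> p \<theta> \<le> P" "0 < t" "t \<le> T" "1 \<le> T"
  shows "var_modular p g \<le> ennreal (T powr P) * var_modular p (\<lambda>z. g z / complex_of_real t)"
proof -
  have pointwise: "norm (g (cis \<theta>)) powr p \<theta> \<le> T powr P * norm (g (cis \<theta>) / complex_of_real t) powr p \<theta>"
    if "\<theta> \<in> {0..2*pi}" for \<theta>
  proof -
    have "t powr p \<theta> \<le> T powr p \<theta>"
      using assms(3-5) that by (intro powr_mono2) auto
    also have "\<dots> \<le> T powr P"
      using assms(3,6) that by (intro powr_mono) auto
    finally have "norm (g (cis \<theta>)) powr p \<theta> \<le> T powr P * (norm (g (cis \<theta>)) powr p \<theta> / t powr p \<theta>)"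
      using assms(4) by (simp add: field_simps mult_right_mono)
    then show ?thesis
      using assms(4) by (simp add: norm_divide powr_divide)
  qed
  have "var_modular p g
      \<le> (\<integral>\<^sup>+ \<theta>. ennreal (T powr P * norm (g (cis \<theta>) / complex_of_real t) powr p \<theta>) * indicator {0..2*pi} \<theta> \<partial>lborel)"
    unfolding var_modular_def using pointwise
    by (intro nn_integral_mono) (auto simp: ennreal_leI indicator_def)
  also have "\<dots> = ennreal (T powr P) * var_modular p (\<lambda>z. g z / complex_of_real t)"
    unfolding var_modular_def using assms(1,2)
    by (subst nn_integral_cmult[symmetric]) (auto simp: ennreal_mult mult.assoc)
  finally show ?thesis .
qed

lemma lux_norm_le:
  assumes "p \<in> borel_measurable lborel" "(\<lambda>\<theta>. g (cis \<theta>)) \<in> borel_measurable lborel"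
    and "\<forall>\<theta>\<in>{0..2*pi}. 1 \<le> p \<theta>" "1 \<le> T" "var_modular p g \<le> ennreal T"
  shows "lux_norm p g \<le> ereal T"
proof -
  have "ennreal T * var_modular p (\<lambda>z. g z / complex_of_real T) \<le> ennreal T * 1"
    using var_modular_divide_le[OF assms(1-4)] assms(5) by simp
  then have "var_modular p (\<lambda>z. g z / complex_of_real T) \<le> 1"
    using assms(4) by (subst (asm) ennreal_mult_le_mult_iff) auto
  then show ?thesis
    unfolding lux_norm_def using assms(4) by (intro INF_lower2[of T]) auto
qed

lemma lux_norm_ge:
  assumes "p \<in> borel_measurable lborel" "(\<lambda>\<theta>. g (cis \<theta>)) \<in> borel_measurable lborel"
    and "\<forall>\<theta>\<in>{0..2*pi}. 0 \<le> p \<theta> \<and> p \<theta> \<le> P" "1 \<le> T"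
    and "ennreal (T powr P) < var_modular p g"
  shows "ereal T \<le> lux_norm p g"
  unfolding lux_norm_def
proof (rule INF_greatest)
  fix t assume t: "t \<in> {t. 0 < t \<and> var_modular p (\<lambda>z. g z / complex_of_real t) \<le> 1}"
  show "ereal T \<le> ereal t"
  proof (rule ccontr)
    assume "\<not> ereal T \<le> ereal t"
    then have "var_modular p g \<le> ennreal (T powr P) * var_modular p (\<lambda>z. g z / complex_of_real t)"
      using t by (intro var_modular_le_mult_divide[OF assms(1-3) _ _ assms(4)]) auto
    also have "\<dots> \<le> ennreal (T powr P)"
      using t mult_left_mono[of _ 1 "ennreal (T powr P)"] by auto
    finally show False using assms(5) by simp
  qed
qed

lemma measurable_holomorphic_circle:
  assumes "f holomorphic_on ball 0 1" "\<bar>r\<bar> < 1"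
  shows "(\<lambda>\<theta>. f (complex_of_real r * cis \<theta>)) \<in> borel_measurable lborel"
proof -
  have "continuous_on UNIV (\<lambda>\<theta>. f (complex_of_real r * cis \<theta>))"
    using assms by (intro continuous_on_compose2[OF holomorphic_on_imp_continuous_on[OF assms(1)]]
      continuous_intros) (auto simp: norm_mult)
  then show ?thesis
    using borel_measurable_continuous_onI by simp
qed

lemma var_modular_bounded_if_hardy_var:
  assumes "p \<in> borel_measurable lborel" "\<forall>\<theta>\<in>{0..2*pi}. 0 \<le> p \<theta> \<and> p \<theta> \<le> P"
    and "f \<in> hardy_var p"
  shows "(SUP r\<in>{0..<1}. var_modular p (\<lambda>\<zeta>. f (complex_of_real r * \<zeta>))) < \<infinity>"
proof -
  have holo: "f holomorphic_on ball 0 1"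
    and "(SUP r\<in>{0..<1}. lux_norm p (\<lambda>\<zeta>. f (complex_of_real r * \<zeta>))) \<noteq> \<infinity>"
    using assms(3) unfolding hardy_var_def by auto
  then obtain n :: nat where n: "(SUP r\<in>{0..<1}. lux_norm p (\<lambda>\<zeta>. f (complex_of_real r * \<zeta>))) < ereal n"
    unfolding less_PInf_Ex_of_nat by blast
  define L where "L = max 1 (real n)"
  have "\<not> ennreal (L powr P) < var_modular p (\<lambda>\<zeta>. f (complex_of_real r * \<zeta>))" if "r \<in> {0..<1}" for r
  proof
    assume "ennreal (L powr P) < var_modular p (\<lambda>\<zeta>. f (complex_of_real r * \<zeta>))"
    then have "ereal L \<le> lux_norm p (\<lambda>\<zeta>. f (complex_of_real r * \<zeta>))"
      using assms(1,2) measurable_holomorphic_circle[OF holo] that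
      by (intro lux_norm_ge[where P = P]) (auto simp: L_def)
    also have "\<dots> < ereal n"
      using SUP_upper[OF that] n by (rule le_less_trans)
    finally show False by (simp add: L_def)
  qed
  then have "(SUP r\<in>{0..<1}. var_modular p (\<lambda>\<zeta>. f (complex_of_real r * \<zeta>))) \<le> ennreal (L powr P)"
    by (intro SUP_least) (simp add: not_less)
  then show ?thesis
    by (simp add: le_less_trans)
qed

lemma hardy_var_if_var_modular_bounded:
  assumes "p \<in> borel_measurable lborel" "\<forall>\<theta>\<in>{0..2*pi}. 1 \<le> p \<theta>"
    and holo: "f holomorphic_on ball 0 1"
    and "(SUP r\<in>{0..<1}. var_modular p (\<lambda>\<zeta>. f (complex_of_real r * \<zeta>))) < \<infinity>"
  shows "f \<in> hardy_var p"
proof -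
  obtain C where C: "(SUP r\<in>{0..<1}. var_modular p (\<lambda>\<zeta>. f (complex_of_real r * \<zeta>))) = ennreal C"
    using assms(4) unfolding infinity_ennreal_def less_top_ennreal by blast
  have "lux_norm p (\<lambda>\<zeta>. f (complex_of_real r * \<zeta>)) \<le> ereal (max 1 C)" if "r \<in> {0..<1}" for r
  proof (rule lux_norm_le)
    have "var_modular p (\<lambda>\<zeta>. f (complex_of_real r * \<zeta>)) \<le> ennreal C"
      using SUP_upper[OF that, of "\<lambda>r. var_modular p (\<lambda>\<zeta>. f (complex_of_real r * \<zeta>))"] C
      by simp
    then show "var_modular p (\<lambda>\<zeta>. f (complex_of_real r * \<zeta>)) \<le> ennreal (max 1 C)"
      by (rule order_trans) (simp add: ennreal_leI)
    show "(\<lambda>\<theta>. f (complex_of_real r * cis \<theta>)) \<in> borel_measurable lborel"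
      using measurable_holomorphic_circle[OF holo] that by simp
  qed (use assms(1,2) in auto)
  then have "(SUP r\<in>{0..<1}. lux_norm p (\<lambda>\<zeta>. f (complex_of_real r * \<zeta>))) \<le> ereal (max 1 C)"
    by (rule SUP_least)
  then have "(SUP r\<in>{0..<1}. lux_norm p (\<lambda>\<zeta>. f (complex_of_real r * \<zeta>))) < \<infinity>"
    by (rule le_less_trans) (simp add: max_def)
  then show ?thesis
    unfolding hardy_var_def using holo by blast
qed

lemma hardy_var_eq_var_modular:
  assumes "p \<in> borel_measurable lborel" "\<forall>\<theta>\<in>{0..2*pi}. 1 \<le> p \<theta> \<and> p \<theta> \<le> P"
  shows "hardy_var p = {f. f holomorphic_on ball 0 1 \<and>
     (SUP r\<in>{0..<1}. var_modular p (\<lambda>\<zeta>. f (complex_of_real r * \<zeta>))) < \<infinity>}"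
proof (rule set_eqI)
  fix f
  have "\<forall>\<theta>\<in>{0..2*pi}. 0 \<le> p \<theta> \<and> p \<theta> \<le> P"
    using assms(2) by (meson order_trans zero_le_one)
  moreover have "f \<in> hardy_var p \<Longrightarrow> f holomorphic_on ball 0 1"
    by (simp add: hardy_var_def)
  moreover have "\<forall>\<theta>\<in>{0..2*pi}. 1 \<le> p \<theta>"
    using assms(2) by blast
  ultimately show "f \<in> hardy_var p \<longleftrightarrow> f \<in> {f. f holomorphic_on ball 0 1 \<and>
     (SUP r\<in>{0..<1}. var_modular p (\<lambda>\<zeta>. f (complex_of_real r * \<zeta>))) < \<infinity>}"
    using var_modular_bounded_if_hardy_var[OF assms(1)] hardy_var_if_var_modular_bounded[OF assms(1)]
    by blast
qed

section \<open>Powers with a singularity on the circle\<close>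

definition boundary_power :: "real \<Rightarrow> real \<Rightarrow> complex \<Rightarrow> complex" where
  "boundary_power a c z = (1 - cis (- c) * z) powr complex_of_real (- a)"

lemma boundary_power_holomorphic: "boundary_power a c holomorphic_on ball 0 1"
  unfolding boundary_power_def
proof (intro holomorphic_intros)
  fix z :: complex assume "z \<in> ball 0 1"
  then have "Re (cis (- c) * z) < 1"
    using abs_Re_le_cmod[of "cis (- c) * z"] by (auto simp: norm_mult)
  then show "1 - cis (- c) * z \<notin> \<real>\<^sub>\<le>\<^sub>0"
    by (auto simp: complex_nonpos_Reals_iff)
qed

lemma norm_boundary_power_rcis:
  "norm (boundary_power a c (complex_of_real r * cis \<theta>))
     = cmod (1 - complex_of_real r * cis (\<theta> - c)) powr (- a)"
proof -
  have rotate: "cis (- c) * (complex_of_real r * cis \<theta>) = complex_of_real r * cis (\<theta> - c)"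
    by (simp add: cis_mult mult.left_commute)
  show ?thesis
    unfolding boundary_power_def rotate by (subst norm_powr_real_powr') auto
qed

lemma boundary_power_var_modular_unbounded:
  assumes "0 < a" "0 < b" "{c..c + b} \<subseteq> {0..2*pi}" "\<forall>\<theta>\<in>{c..c + b}. p \<theta> = 1 / a"
  shows "\<not> (SUP r\<in>{0..<1}. var_modular p (\<lambda>\<zeta>. boundary_power a c (complex_of_real r * \<zeta>))) < \<infinity>"
proof -
  have "\<exists>r\<in>{0..<1}. ennreal M \<le> var_modular p (\<lambda>\<zeta>. boundary_power a c (complex_of_real r * \<zeta>))"
    for M
  proof
    define \<epsilon> where "\<epsilon> = min 1 b / exp \<bar>M\<bar>"
    have \<epsilon>: "0 < \<epsilon>" "\<epsilon> \<le> 1" "\<epsilon> * exp \<bar>M\<bar> \<le> b"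
      using assms(2) by (auto simp: \<epsilon>_def divide_le_eq_1 min_le_iff_disj)
    define r where "r = 1 - \<epsilon>"
    show "r \<in> {0..<1}"
      using \<epsilon> by (simp add: r_def)
    have "exp \<bar>M\<bar> \<le> (\<epsilon> + b) / \<epsilon>"
      using \<epsilon> by (simp add: field_simps)
    then have "M \<le> ln ((\<epsilon> + b) / \<epsilon>)"
      using \<epsilon> assms(2) ln_le_cancel_iff[of "exp \<bar>M\<bar>" "(\<epsilon> + b) / \<epsilon>"] by simp
    then have "ennreal M \<le> ennreal (ln ((\<epsilon> + b) / \<epsilon>))"
      by (rule ennreal_leI)
    also have "\<dots> = (\<integral>\<^sup>+ \<theta>. ennreal (1 / (\<epsilon> + (\<theta> - c))) * indicator {c..c + b} \<theta> \<partial>lborel)"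
      using \<epsilon> assms(2)
      by (intro nn_integral_has_integral_lebesgue'[symmetric] has_integral_inverse_shift) auto
    also have "\<dots> \<le> var_modular p (\<lambda>\<zeta>. boundary_power a c (complex_of_real r * \<zeta>))"
      unfolding var_modular_def
    proof (intro nn_integral_mono)
      fix \<theta> :: real
      show "ennreal (1 / (\<epsilon> + (\<theta> - c))) * indicator {c..c + b} \<theta>
        \<le> ennreal (cmod (boundary_power a c (complex_of_real r * cis \<theta>)) powr p \<theta>) * indicator {0..2*pi} \<theta>"
      proof (cases "\<theta> \<in> {c..c + b}")
        case True
        let ?d = "cmod (1 - complex_of_real r * cis (\<theta> - c))"
        have "0 < ?d"
          using \<epsilon> by (intro norm_one_minus_rcis_pos) (simp add: r_def)
        moreover have "?d \<le> \<epsilon> + (\<theta> - c)"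
          using norm_one_minus_rcis_le[of r "\<theta> - c"] \<epsilon> True by (simp add: r_def)
        ultimately have "1 / (\<epsilon> + (\<theta> - c)) \<le> (?d powr (- a)) powr p \<theta>"
          using True assms(1,4) by (simp add: powr_powr frac_le)
        then show ?thesis
          using True assms(3) by (auto simp: norm_boundary_power_rcis ennreal_leI)
      qed simp
    qed
    finally show "ennreal M \<le> var_modular p (\<lambda>\<zeta>. boundary_power a c (complex_of_real r * \<zeta>))" .
  qed
  then show ?thesis
    unfolding infinity_ennreal_def less_top_ennreal
    by (metis SUP_upper add_le_same_cancel1 ennreal_le_iff not_one_le_zero order_trans)
qed

text \<open>Where cos (theta - c) <= 0 the kernel |1 - r e^(i (theta - c))| is at least 1, so p needs no
  upper bound there.\<close>
lemma boundary_power_var_modular_bounded: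
  assumes "0 \<le> s" "s < 1" "c \<in> {0..2*pi}"
    and "\<forall>\<theta>\<in>{0..2*pi}. 0 \<le> a * p \<theta> \<and> (0 < cos (\<theta> - c) \<longrightarrow> a * p \<theta> \<le> s)"
  shows "(SUP r\<in>{0..<1}. var_modular p (\<lambda>\<zeta>. boundary_power a c (complex_of_real r * \<zeta>))) < \<infinity>"
proof -
  define B where "B \<theta> = 1 + 6 powr s * (\<bar>\<theta> - c\<bar> powr (- s) + \<bar>\<theta> - (c + 2 * pi)\<bar> powr (- s)
    + \<bar>\<theta> - (c - 2 * pi)\<bar> powr (- s))" for \<theta>
  have "B integrable_on {0..2*pi}"
    unfolding B_def using assms(2)
    by (intro integrable_add integrable_on_mult_right integrable_abs_diff_powr integrable_const_ivl)
  then obtain I where I: "(B has_integral I) {0..2*pi}"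
    by blast
  have B_ge_1: "1 \<le> B \<theta>" for \<theta>
    by (simp add: B_def)
  have "var_modular p (\<lambda>\<zeta>. boundary_power a c (complex_of_real r * \<zeta>)) \<le> ennreal I"
    if r: "r \<in> {0..<1}" for r
  proof (rule var_modular_le_has_integral[OF I])
    show "\<forall>\<theta>\<in>{0..2*pi}. 0 \<le> B \<theta>"
      using B_ge_1 order_trans[OF zero_le_one] by blast
    show "AE \<theta> in lborel. \<theta> \<in> {0..2*pi} \<longrightarrow>
        cmod (boundary_power a c (complex_of_real r * cis \<theta>)) powr p \<theta> \<le> B \<theta>"
      using AE_lborel_singleton[of c] AE_lborel_singleton[of "c + 2 * pi"]
        AE_lborel_singleton[of "c - 2 * pi"]
    proof eventually_elim
      case (elim \<theta>)
      show ?case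
      proof
        assume \<theta>: "\<theta> \<in> {0..2*pi}"
        let ?d = "cmod (1 - complex_of_real r * cis (\<theta> - c))"
        have "0 < ?d"
          using r by (intro norm_one_minus_rcis_pos) auto
        have "cmod (boundary_power a c (complex_of_real r * cis \<theta>)) powr p \<theta> = ?d powr (- (a * p \<theta>))"
          by (simp add: norm_boundary_power_rcis powr_powr)
        also have "\<dots> \<le> B \<theta>"
        proof (cases "0 < cos (\<theta> - c)")
          case True
          have "?d powr (- (a * p \<theta>)) \<le> 1 + ?d powr (- s)"
            using True \<open>0 < ?d\<close> \<theta> assms(4) by (intro powr_neg_le_one_plus) auto
          also have "?d powr (- s) \<le> 6 powr s * (\<bar>\<theta> - c\<bar> powr (- s) + \<bar>\<theta> - c - 2 * pi\<bar> powr (- s)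
              + \<bar>\<theta> - c + 2 * pi\<bar> powr (- s))"
            using r assms(1,3) \<theta> elim by (intro norm_one_minus_rcis_powr_le) auto
          finally show ?thesis
            by (simp add: B_def algebra_simps)
        next
          case False
          then have "1 \<le> ?d"
            using r by (intro one_le_norm_one_minus_rcis) auto
          moreover have "0 \<le> a * p \<theta>"
            using \<theta> assms(4) by auto
          ultimately have "1 \<le> ?d powr (a * p \<theta>)"
            by (rule ge_one_powr_ge_zero)
          then have "?d powr (- (a * p \<theta>)) \<le> 1"
            by (simp add: powr_minus_divide divide_le_eq_1)
          then show ?thesis
            using B_ge_1[of \<theta>] by linarith
        qed
        finally show "cmod (boundary_power a c (complex_of_real r * cis \<theta>)) powr p \<theta> \<le> B \<theta>" .
      qed
    qed
  qed
  then have "(SUP r\<in>{0..<1}. var_modular p (\<lambda>\<zeta>. boundary_power a c (complex_of_real r * \<zeta>))) \<le> ennreal I"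
    by (rule SUP_least)
  then show ?thesis
    by (simp add: le_less_trans)
qed

lemma boundary_power_in_hardy:
  assumes "0 \<le> a * q" "a * q < 1" "c \<in> {0..2*pi}"
  shows "boundary_power a c \<in> hardy q"
proof -
  have "(SUP r\<in>{0..<1}. var_modular (\<lambda>_. q) (\<lambda>\<zeta>. boundary_power a c (complex_of_real r * \<zeta>))) < \<infinity>"
    by (rule boundary_power_var_modular_bounded[where s = "a * q"]) (use assms in auto)
  then show ?thesis
    unfolding hardy_eq_var_modular using boundary_power_holomorphic by blast
qed

lemma boundary_power_not_in_hardy:
  assumes "0 < a" "c \<in> {0..<2*pi}"
  shows "boundary_power a c \<notin> hardy (1 / a)"
proof -
  have "\<not> (SUP r\<in>{0..<1}. var_modular (\<lambda>_. 1 / a) (\<lambda>\<zeta>. boundary_power a c (complex_of_real r * \<zeta>))) < \<infinity>"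
    by (rule boundary_power_var_modular_unbounded[where b = "2 * pi - c"]) (use assms in auto)
  then show ?thesis
    unfolding hardy_eq_var_modular by blast
qed

section \<open>The exponent\<close>

lemma lipschitz_on_imp_log_holder:
  assumes "C-lipschitz_on {0..2*pi} p"
  shows "log_holder p"
  unfolding log_holder_def
proof (intro exI[of _ "C + 1"] conjI ballI impI)
  show "0 < C + 1"
    using lipschitz_on_nonneg[OF assms] by simp
  fix x y assume xy: "x \<in> {0..2*pi}" "y \<in> {0..2*pi}" and d: "0 < \<bar>x - y\<bar> \<and> \<bar>x - y\<bar> < 1"
  have "ln (1 / \<bar>x - y\<bar>) \<le> 1 / \<bar>x - y\<bar>"
    using ln_le_minus_one[of "1 / \<bar>x - y\<bar>"] d by simp
  moreover have "0 < ln (1 / \<bar>x - y\<bar>)"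
    using d by simp
  ultimately have "\<bar>x - y\<bar> \<le> 1 / ln (1 / \<bar>x - y\<bar>)"
    using d by (simp add: field_simps)
  then have "C * \<bar>x - y\<bar> \<le> C / ln (1 / \<bar>x - y\<bar>)"
    using lipschitz_on_nonneg[OF assms] mult_left_mono by fastforce
  also have "\<dots> \<le> (C + 1) / ln (1 / \<bar>x - y\<bar>)"
    using \<open>0 < ln (1 / \<bar>x - y\<bar>)\<close> by (simp add: divide_right_mono)
  finally have "C * \<bar>x - y\<bar> \<le> (C + 1) / ln (1 / \<bar>x - y\<bar>)" .
  then show "\<bar>p x - p y\<bar> \<le> (C + 1) / ln (1 / \<bar>x - y\<bar>)"
    using lipschitz_onD[OF assms xy] by (simp add: dist_real_def)
qed

lemma abs_cos_diff_le: "\<bar>cos x - cos y\<bar> \<le> \<bar>x - y\<bar>" for x y :: real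
proof -
  have "\<bar>cos x - cos y\<bar> = 2 * \<bar>sin ((x + y) / 2)\<bar> * \<bar>sin ((y - x) / 2)\<bar>"
    by (simp add: cos_diff_cos abs_mult)
  also have "\<dots> \<le> 2 * 1 * \<bar>(y - x) / 2\<bar>"
    by (intro mult_mono abs_sin_x_le_abs_x) auto
  finally show ?thesis by simp
qed

lemma abs_clamp_diff_le: "\<bar>min 1 (max 0 u) - min 1 (max 0 v)\<bar> \<le> \<bar>u - v\<bar>" for u v :: real
  by (auto simp: min_def max_def)

definition peak_exponent :: "real \<Rightarrow> real \<Rightarrow> real \<Rightarrow> real" where
  "peak_exponent q1 q2 \<theta> = q1 + (q2 - q1) * min 1 (max 0 (2 * cos \<theta>))"

lemma peak_exponent_periodic: "peak_exponent q1 q2 (\<theta> + 2 * pi) = peak_exponent q1 q2 \<theta>"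
  by (simp add: peak_exponent_def)

lemma peak_exponent_bounds:
  assumes "q1 \<le> q2" shows "q1 \<le> peak_exponent q1 q2 \<theta>" "peak_exponent q1 q2 \<theta> \<le> q2"
  using assms mult_left_le[of "min 1 (max 0 (2 * cos \<theta>))" "q2 - q1"]
  by (simp_all add: peak_exponent_def)

lemma peak_exponent_eq_upper: "1 / 2 \<le> cos \<theta> \<Longrightarrow> peak_exponent q1 q2 \<theta> = q2"
  by (simp add: peak_exponent_def)

lemma peak_exponent_eq_lower: "cos \<theta> \<le> 0 \<Longrightarrow> peak_exponent q1 q2 \<theta> = q1"
  by (simp add: peak_exponent_def)

lemma peak_exponent_lipschitz:
  assumes "q1 \<le> q2"
  shows "(2 * (q2 - q1))-lipschitz_on UNIV (peak_exponent q1 q2)"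
proof (rule lipschitz_onI)
  fix x y :: real
  let ?h = "\<lambda>\<theta>. min 1 (max 0 (2 * cos \<theta>))"
  have "peak_exponent q1 q2 x - peak_exponent q1 q2 y = (q2 - q1) * (?h x - ?h y)"
    by (simp add: peak_exponent_def right_diff_distrib)
  then have "dist (peak_exponent q1 q2 x) (peak_exponent q1 q2 y) = (q2 - q1) * \<bar>?h x - ?h y\<bar>"
    using assms by (simp add: dist_real_def abs_mult)
  also have "\<dots> \<le> (q2 - q1) * \<bar>2 * cos x - 2 * cos y\<bar>"
    using assms by (intro mult_left_mono abs_clamp_diff_le) auto
  also have "\<dots> \<le> (q2 - q1) * (2 * \<bar>x - y\<bar>)"
  proof (rule mult_left_mono)
    show "\<bar>2 * cos x - 2 * cos y\<bar> \<le> 2 * \<bar>x - y\<bar>"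
      using abs_cos_diff_le[of x y] unfolding right_diff_distrib[symmetric] abs_mult by simp
  qed (use assms in simp)
  finally show "dist (peak_exponent q1 q2 x) (peak_exponent q1 q2 y) \<le> 2 * (q2 - q1) * dist x y"
    by (simp add: dist_real_def algebra_simps)
qed (use assms in simp)

lemma hardy_var_peak_exponent:
  assumes "1 \<le> q1" "q1 \<le> q2"
  shows "hardy_var (peak_exponent q1 q2) = {f. f holomorphic_on ball 0 1 \<and>
     (SUP r\<in>{0..<1}. var_modular (peak_exponent q1 q2) (\<lambda>\<zeta>. f (complex_of_real r * \<zeta>))) < \<infinity>}"
proof (rule hardy_var_eq_var_modular)
  show "peak_exponent q1 q2 \<in> borel_measurable lborel"
    unfolding peak_exponent_def by measurable
  show "\<forall>\<theta>\<in>{0..2*pi}. 1 \<le> peak_exponent q1 q2 \<theta> \<and> peak_exponent q1 q2 \<theta> \<le> q2"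
    using peak_exponent_bounds[OF assms(2)] assms(1) by (meson order_trans)
qed

lemma boundary_power_not_in_hardy_var_peak_exponent:
  assumes "1 \<le> q1" "q1 \<le> q2"
  shows "boundary_power (1 / q2) 0 \<notin> hardy_var (peak_exponent q1 q2)"
proof -
  have "\<not> (SUP r\<in>{0..<1}.
      var_modular (peak_exponent q1 q2) (\<lambda>\<zeta>. boundary_power (1 / q2) 0 (complex_of_real r * \<zeta>))) < \<infinity>"
  proof (rule boundary_power_var_modular_unbounded)
    show "\<forall>\<theta>\<in>{0..0 + pi / 3}. peak_exponent q1 q2 \<theta> = 1 / (1 / q2)"
    proof
      fix \<theta> assume "\<theta> \<in> {0..0 + pi / 3}"
      then have "cos (pi / 3) \<le> cos \<theta>"
        by (intro cos_monotone_0_pi_le) auto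
      then show "peak_exponent q1 q2 \<theta> = 1 / (1 / q2)"
        using cos_60 by (simp add: peak_exponent_eq_upper)
    qed
  qed (use assms in auto)
  then show ?thesis
    unfolding hardy_var_peak_exponent[OF assms] by blast
qed

lemma boundary_power_in_hardy_var_peak_exponent:
  assumes "1 \<le> q1" "q1 < q2"
  shows "boundary_power (1 / q2) pi \<in> hardy_var (peak_exponent q1 q2)"
proof -
  have "(SUP r\<in>{0..<1}.
      var_modular (peak_exponent q1 q2) (\<lambda>\<zeta>. boundary_power (1 / q2) pi (complex_of_real r * \<zeta>))) < \<infinity>"
  proof (rule boundary_power_var_modular_bounded[where s = "q1 / q2"])
    show "\<forall>\<theta>\<in>{0..2*pi}. 0 \<le> 1 / q2 * peak_exponent q1 q2 \<theta> \<and>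
        (0 < cos (\<theta> - pi) \<longrightarrow> 1 / q2 * peak_exponent q1 q2 \<theta> \<le> q1 / q2)"
    proof
      fix \<theta> :: real
      have "0 \<le> peak_exponent q1 q2 \<theta>"
        using peak_exponent_bounds(1)[of q1 q2 \<theta>] assms by linarith
      moreover have "peak_exponent q1 q2 \<theta> = q1" if "0 < cos (\<theta> - pi)"
        using that by (intro peak_exponent_eq_lower) (simp add: cos_diff)
      ultimately show "0 \<le> 1 / q2 * peak_exponent q1 q2 \<theta> \<and>
          (0 < cos (\<theta> - pi) \<longrightarrow> 1 / q2 * peak_exponent q1 q2 \<theta> \<le> q1 / q2)"
        using assms by simp
    qed
  qed (use assms in auto)
  then show ?thesis
    unfolding hardy_var_peak_exponent[OF assms(1) less_imp_le[OF assms(2)]]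
    using boundary_power_holomorphic by blast
qed

lemma hardy_var_peak_exponent_ne_hardy:
  assumes "1 < q1" "q1 < q2" "q1 \<le> q" "q \<le> q2"
  shows "hardy_var (peak_exponent q1 q2) \<noteq> hardy q"
proof (cases "q < q2")
  case True
  have "boundary_power (1 / q2) 0 \<in> hardy q"
    using True assms by (intro boundary_power_in_hardy) auto
  moreover have "boundary_power (1 / q2) 0 \<notin> hardy_var (peak_exponent q1 q2)"
    using assms by (intro boundary_power_not_in_hardy_var_peak_exponent) auto
  ultimately show ?thesis by blast
next
  case False
  then have "q = 1 / (1 / q2)"
    using assms by simp
  moreover have "boundary_power (1 / q2) pi \<notin> hardy (1 / (1 / q2))"
    using assms by (intro boundary_power_not_in_hardy) auto
  moreover have "boundary_power (1 / q2) pi \<in> hardy_var (peak_exponent q1 q2)"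
    using assms by (intro boundary_power_in_hardy_var_peak_exponent) auto
  ultimately show ?thesis by blast
qed

theorem proposition3p1:
  fixes q1 q2 :: real
  assumes "1 < q1" and "q1 < q2"
  shows "\<exists>p :: real \<Rightarrow> real.
           (\<forall>x. p (x + 2*pi) = p x) \<and> log_holder p \<and>
           (\<forall>\<theta>\<in>{0..2*pi}. q1 \<le> p \<theta> \<and> p \<theta> \<le> q2) \<and>
           (\<forall>q. q1 \<le> q \<and> q \<le> q2 \<longrightarrow> hardy_var p \<noteq> hardy q)"
proof (intro exI[of _ "peak_exponent q1 q2"] conjI allI ballI impI)
  show "peak_exponent q1 q2 (x + 2*pi) = peak_exponent q1 q2 x" for x
    by (rule peak_exponent_periodic)
  have "(2 * (q2 - q1))-lipschitz_on {0..2*pi} (peak_exponent q1 q2)"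
    using assms by (intro lipschitz_on_subset[OF peak_exponent_lipschitz]) auto
  then show "log_holder (peak_exponent q1 q2)"
    by (rule lipschitz_on_imp_log_holder)
  show "q1 \<le> peak_exponent q1 q2 \<theta>" "peak_exponent q1 q2 \<theta> \<le> q2" for \<theta>
    using peak_exponent_bounds[of q1 q2 \<theta>] assms by auto
  show "hardy_var (peak_exponent q1 q2) \<noteq> hardy q" if "q1 \<le> q \<and> q \<le> q2" for q
    using hardy_var_peak_exponent_ne_hardy[of q1 q2 q] assms that by auto
qed

end
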